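(* If $\sum_{n=1}^N r_n \le C_{min}$, then for all $t\ge 0$ the backlog satisfies $B(t)\le \sum_n \sigma_n + \left(\sum_n r_n\right)\frac{L}{C_{min}}$.
   Context: A multiclass FIFO system serves packets from $N$ classes. Class $n$ has constant service rate $C_n>0$; $C_{min}=\min_n C_n$. The aggregate flow consists of all packets $p^{g,1},p^{g,2},\dots$ in order of arrival (ties broken arbitrarily), with arrival times $0\le a^{g,1}\le a^{g,2}\le\cdots$, lengths $l^{g,j}>0$, and departure times $d^{g,j}=\max\{a^{g,j},d^{g,j-1}\}+l^{g,j}/C_{c(j)}$, $d^{g,0}=0$, $c(j)$ the class of $p^{g,j}$. $L_n$ is the maximum packet length of class $n$, $L=\max_n L_n$. $A_n(s,t)$ is the total length of class-$n$ packets arriving in $[s,t]$; each class satisfies $A_n(s,t)\le r_n(t-s)+\sigma_n$ for all $0\le s\le t$, with $r_n,\sigma_n\ge0$. $A(t)$ is the total length of all packets arrived in $[0,t]$, $A^*(t)$ the total length of packets with departure time $\le t$, and the backlog is $B(t)=A(t)-A^*(t)$. *)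

theory Defs
  imports "HOL-Analysis.Analysis" "HOL-Library.Extended_Nat"
begin

text \<open>Packets of the aggregate flow are indexed 1, 2, ...; there are K of them
  (K = \<infinity> for an infinite flow). Classes are 0, ..., N-1.\<close>

definition packets :: "enat \<Rightarrow> nat set" where
  "packets K = {j. 1 \<le> j \<and> enat j \<le> K}"

primrec dep :: "(nat \<Rightarrow> real) \<Rightarrow> (nat \<Rightarrow> real) \<Rightarrow> (nat \<Rightarrow> real) \<Rightarrow> (nat \<Rightarrow> nat) \<Rightarrow> nat \<Rightarrow> real" where
  "dep a l C c 0 = 0"
| "dep a l C c (Suc j) = max (a (Suc j)) (dep a l C c j) + l (Suc j) / C (c (Suc j))"

definition arr_class :: "enat \<Rightarrow> (nat \<Rightarrow> real) \<Rightarrow> (nat \<Rightarrow> real) \<Rightarrow> (nat \<Rightarrow> nat) \<Rightarrow> nat \<Rightarrow> real \<Rightarrow> real \<Rightarrow> real" where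
  "arr_class K a l c n s t = (\<Sum>j\<in>{j\<in>packets K. c j = n \<and> s \<le> a j \<and> a j \<le> t}. l j)"

definition arr :: "enat \<Rightarrow> (nat \<Rightarrow> real) \<Rightarrow> (nat \<Rightarrow> real) \<Rightarrow> real \<Rightarrow> real" where
  "arr K a l t = (\<Sum>j\<in>{j\<in>packets K. 0 \<le> a j \<and> a j \<le> t}. l j)"

definition departed :: "enat \<Rightarrow> (nat \<Rightarrow> real) \<Rightarrow> (nat \<Rightarrow> real) \<Rightarrow> (nat \<Rightarrow> real) \<Rightarrow> (nat \<Rightarrow> nat) \<Rightarrow> real \<Rightarrow> real" where
  "departed K a l C c t = (\<Sum>j\<in>{j\<in>packets K. dep a l C c j \<le> t}. l j)"

definition backlog :: "enat \<Rightarrow> (nat \<Rightarrow> real) \<Rightarrow> (nat \<Rightarrow> real) \<Rightarrow> (nat \<Rightarrow> real) \<Rightarrow> (nat \<Rightarrow> nat) \<Rightarrow> real \<Rightarrow> real" where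
  "backlog K a l C c t = arr K a l t - departed K a l C c t"

definition maxlen_class :: "enat \<Rightarrow> (nat \<Rightarrow> real) \<Rightarrow> (nat \<Rightarrow> nat) \<Rightarrow> nat \<Rightarrow> real" where
  "maxlen_class K l c n =
     (if {j\<in>packets K. c j = n} = {} then 0 else Sup (l ` {j\<in>packets K. c j = n}))"

definition maxlen :: "nat \<Rightarrow> enat \<Rightarrow> (nat \<Rightarrow> real) \<Rightarrow> (nat \<Rightarrow> nat) \<Rightarrow> real" where
  "maxlen N K l c = Max ((maxlen_class K l c) ` {..<N})"

definition Cmin :: "nat \<Rightarrow> (nat \<Rightarrow> real) \<Rightarrow> real" where
  "Cmin N C = Min (C ` {..<N})"

end

theory Submission
  imports Defs
begin

text \<open>Let p be the oldest packet still unfinished at time t and let the busy period containing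
  its service start at the arrival time s of packet i. The server works without idling on the
  packets i, ..., p at rate at least Cmin, so p departs no later than
  s + (work of i, ..., p) / Cmin; as p departs after t, the earlier packets i, ..., p-1 carry
  work Y > Cmin (t - s) - L. Together with the unfinished packets they all arrived in [s, t],
  so by the aggregate arrival curve the backlog is at most (\<Sum> r) (t - s) + \<Sum> \<sigma> - Y.
  Since \<Sum> r \<le> Cmin, the worst case over t - s is t - s = L / Cmin.\<close>

lemma packets_downward_closed:
  assumes "j \<in> packets K" "1 \<le> i" "i \<le> j"
  shows "i \<in> packets K"
  using assms unfolding packets_def by (auto intro: order_trans[of "enat i" "enat j" K])

lemma dep_busy_period:
  assumes "1 \<le> i" "i \<le> p"
    and start: "dep a l C c (i - 1) \<le> a i"
    and busy: "\<And>j. i < j \<Longrightarrow> j \<le> p \<Longrightarrow> a j < dep a l C c (j - 1)"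
  shows "dep a l C c p = a i + (\<Sum>q\<in>{i..p}. l q / C (c q))"
  using \<open>i \<le> p\<close> busy
proof (induction p rule: dec_induct)
  case base
  then show ?case using start \<open>1 \<le> i\<close> by (cases i) auto
next
  case (step n)
  have IH: "dep a l C c n = a i + (\<Sum>q\<in>{i..n}. l q / C (c q))"
    using step by simp
  have "a (Suc n) < dep a l C c n"
    using step.prems[of "Suc n"] step.hyps by simp
  then have "dep a l C c (Suc n) = dep a l C c n + l (Suc n) / C (c (Suc n))"
    by simp
  also have "\<dots> = a i + (\<Sum>q\<in>{i..Suc n}. l q / C (c q))"
    using IH step.hyps by (simp add: sum.cl_ivl_Suc)
  finally show ?case .
qed

lemma busy_period_start_exists:
  assumes "0 \<le> a 1" "1 \<le> p"
  shows "\<exists>i. 1 \<le> i \<and> i \<le> p \<and> dep a l C c (i - 1) \<le> a i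
           \<and> (\<forall>j. i < j \<and> j \<le> p \<longrightarrow> a j < dep a l C c (j - 1))"
  using \<open>1 \<le> p\<close>
proof (induction p rule: nat_induct_at_least)
  case base
  then show ?case using \<open>0 \<le> a 1\<close> by auto
next
  case (Suc p)
  show ?case
  proof (cases "dep a l C c p \<le> a (Suc p)")
    case True
    then show ?thesis by (intro exI[of _ "Suc p"]) auto
  next
    case False
    with Suc.IH show ?thesis by (metis le_Suc_eq not_le diff_Suc_1)
  qed
qed

lemma sum_arrivals_eq_sum_arr_class:
  assumes "\<And>j. j \<in> packets K \<Longrightarrow> c j < N"
    and "finite {j\<in>packets K. s \<le> a j \<and> a j \<le> t}"
  shows "(\<Sum>j\<in>{j\<in>packets K. s \<le> a j \<and> a j \<le> t}. l j) = (\<Sum>n<N. arr_class K a l c n s t)"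
    (is "(\<Sum>j\<in>?S. l j) = _")
proof -
  have "(\<Sum>n<N. arr_class K a l c n s t) = (\<Sum>n<N. \<Sum>j\<in>?S. if c j = n then l j else 0)"
  proof (rule sum.cong[OF refl])
    fix n
    have "{j\<in>packets K. c j = n \<and> s \<le> a j \<and> a j \<le> t} = {j\<in>?S. c j = n}"
      by auto
    then show "arr_class K a l c n s t = (\<Sum>j\<in>?S. if c j = n then l j else 0)"
      unfolding arr_class_def by (simp only: sum.inter_filter[OF assms(2)])
  qed
  also have "\<dots> = (\<Sum>j\<in>?S. \<Sum>n<N. if c j = n then l j else 0)"
    by (rule sum.swap)
  also have "\<dots> = (\<Sum>j\<in>?S. l j)"
    using assms(1) by (intro sum.cong refl) (simp add: sum.delta')
  finally show ?thesis by (rule sym)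
qed

lemma Cmin_le:
  assumes "n < N"
  shows "Cmin N C \<le> C n"
  unfolding Cmin_def using assms by (intro Min_le) auto

lemma Cmin_pos:
  assumes "0 < N" "\<And>n. n < N \<Longrightarrow> 0 < C n"
  shows "0 < Cmin N C"
proof -
  have "Cmin N C \<in> C ` {..<N}"
    unfolding Cmin_def using assms(1) by (intro Min_in) auto
  then show ?thesis using assms(2) by auto
qed

lemma le_maxlen_class:
  assumes "bdd_above (l ` packets K)" "j \<in> packets K"
  shows "l j \<le> maxlen_class K l c (c j)"
proof -
  have "l j \<le> Sup (l ` {i\<in>packets K. c i = c j})"
    using assms by (intro cSup_upper) (auto intro: bdd_above_mono)
  then show ?thesis unfolding maxlen_class_def using assms(2) by auto
qed

lemma maxlen_class_nonneg:
  assumes "bdd_above (l ` packets K)" "\<And>j. j \<in> packets K \<Longrightarrow> 0 \<le> l j"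
  shows "0 \<le> maxlen_class K l c n"
proof (cases "{j\<in>packets K. c j = n} = {}")
  case True
  then show ?thesis unfolding maxlen_class_def by simp
next
  case False
  then obtain j where "j \<in> packets K" "c j = n" by auto
  then show ?thesis
    using le_maxlen_class[OF assms(1), of j c] assms(2)[of j] by simp
qed

lemma maxlen_class_le_maxlen:
  assumes "n < N"
  shows "maxlen_class K l c n \<le> maxlen N K l c"
  unfolding maxlen_def using assms by (intro Max_ge) auto

lemma le_maxlen:
  assumes "bdd_above (l ` packets K)" "j \<in> packets K" "c j < N"
  shows "l j \<le> maxlen N K l c"
  using le_maxlen_class[OF assms(1,2)] maxlen_class_le_maxlen[OF assms(3)] by (rule order_trans)

lemma maxlen_nonneg:
  assumes "0 < N" "bdd_above (l ` packets K)" "\<And>j. j \<in> packets K \<Longrightarrow> 0 \<le> l j"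
  shows "0 \<le> maxlen N K l c"
  using maxlen_class_nonneg[OF assms(2,3)] maxlen_class_le_maxlen[OF assms(1)] by (rule order_trans)

lemma aggregate_arrival_curve:
  assumes "\<And>j. j \<in> packets K \<Longrightarrow> c j < N"
    and "\<And>t. finite {j\<in>packets K. a j \<le> t}"
    and "\<And>n s t. n < N \<Longrightarrow> 0 \<le> s \<Longrightarrow> s \<le> t \<Longrightarrow>
           arr_class K a l c n s t \<le> r n * (t - s) + \<sigma> n"
    and "0 \<le> s" "s \<le> t"
  shows "(\<Sum>j\<in>{j\<in>packets K. s \<le> a j \<and> a j \<le> t}. l j) \<le> (\<Sum>n<N. r n) * (t - s) + (\<Sum>n<N. \<sigma> n)"
proof -
  have "finite {j\<in>packets K. s \<le> a j \<and> a j \<le> t}"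
    by (rule finite_subset[OF _ assms(2)[of t]]) auto
  with assms(1) have "(\<Sum>j\<in>{j\<in>packets K. s \<le> a j \<and> a j \<le> t}. l j)
      = (\<Sum>n<N. arr_class K a l c n s t)"
    by (rule sum_arrivals_eq_sum_arr_class)
  also have "\<dots> \<le> (\<Sum>n<N. r n * (t - s) + \<sigma> n)"
    using assms(3-5) by (intro sum_mono) auto
  finally show ?thesis by (simp add: sum.distrib sum_distrib_right)
qed

text \<open>The final optimisation over the length x of the busy interval before t.\<close>

lemma backlog_arith:
  fixes B Y R Sg Cm L x :: real
  assumes "B + Y \<le> R * x + Sg" "Cm * x < Y + L" "0 \<le> Y"
    and "0 \<le> R" "R \<le> Cm" "0 < Cm"
  shows "B \<le> Sg + R * (L / Cm)"
proof (cases "x \<le> L / Cm")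
  case True
  then have "R * x \<le> R * (L / Cm)" using \<open>0 \<le> R\<close> by (rule mult_left_mono)
  then show ?thesis using assms(1,3) by linarith
next
  case False
  then have "0 \<le> (Cm - R) * (x - L / Cm)"
    using \<open>R \<le> Cm\<close> by (intro mult_nonneg_nonneg) auto
  also have "\<dots> = Cm * x - R * x - L + R * (L / Cm)"
    using \<open>0 < Cm\<close> by (simp add: field_simps)
  finally have "R * x - Cm * x + L \<le> R * (L / Cm)"
    by linarith
  then show ?thesis using assms(1,2) by linarith
qed

definition unfinished ::
  "enat \<Rightarrow> (nat \<Rightarrow> real) \<Rightarrow> (nat \<Rightarrow> real) \<Rightarrow> (nat \<Rightarrow> real) \<Rightarrow> (nat \<Rightarrow> nat) \<Rightarrow> real \<Rightarrow> nat set"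
  where "unfinished K a l C c t = {j\<in>packets K. a j \<le> t \<and> t < dep a l C c j}"

locale fifo_system =
  fixes K :: enat and a l C :: "nat \<Rightarrow> real" and c :: "nat \<Rightarrow> nat"
  assumes a_nonneg: "\<And>j. j \<in> packets K \<Longrightarrow> 0 \<le> a j"
    and a_mono: "\<And>i j. i \<in> packets K \<Longrightarrow> j \<in> packets K \<Longrightarrow> i \<le> j \<Longrightarrow> a i \<le> a j"
    and l_nonneg: "\<And>j. j \<in> packets K \<Longrightarrow> 0 \<le> l j"
    and rate_pos: "\<And>j. j \<in> packets K \<Longrightarrow> 0 < C (c j)"
    and finite_arrivals: "\<And>t. finite {j\<in>packets K. a j \<le> t}"
begin

lemma arrival_le_dep:
  assumes "j \<in> packets K"
  shows "a j \<le> dep a l C c j"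
proof -
  obtain k where "j = Suc k"
    using assms unfolding packets_def by (cases j) auto
  moreover have "0 \<le> l j / C (c j)"
    using l_nonneg[OF assms] rate_pos[OF assms] by simp
  ultimately show ?thesis by simp
qed

lemma finite_unfinished: "finite (unfinished K a l C c t)"
  unfolding unfinished_def by (rule finite_subset[OF _ finite_arrivals[of t]]) auto

lemma backlog_eq_sum_unfinished:
  "backlog K a l C c t = (\<Sum>j\<in>unfinished K a l C c t. l j)"
proof -
  let ?A = "{j\<in>packets K. 0 \<le> a j \<and> a j \<le> t}"
  let ?D = "{j\<in>packets K. dep a l C c j \<le> t}"
  have "?D \<subseteq> ?A"
  proof
    fix j assume "j \<in> ?D"
    then show "j \<in> ?A"
      using arrival_le_dep[of j] a_nonneg[of j] by simp
  qed
  moreover have "finite ?A"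
    by (rule finite_subset[OF _ finite_arrivals[of t]]) auto
  ultimately have "backlog K a l C c t = (\<Sum>j\<in>?A - ?D. l j)"
    unfolding backlog_def arr_def departed_def by (simp only: sum_diff)
  also have "?A - ?D = unfinished K a l C c t"
    using a_nonneg by (auto simp: unfinished_def)
  finally show ?thesis .
qed

lemma dep_le_busy_period_work:
  assumes Cm: "0 < Cm" "\<And>j. j \<in> packets K \<Longrightarrow> Cm \<le> C (c j)"
    and "p \<in> packets K" "1 \<le> i" "i \<le> p"
    and "dep a l C c (i - 1) \<le> a i"
    and "\<And>j. i < j \<Longrightarrow> j \<le> p \<Longrightarrow> a j < dep a l C c (j - 1)"
  shows "dep a l C c p \<le> a i + (\<Sum>q\<in>{i..p}. l q) / Cm"
proof -
  have "l q / C (c q) \<le> l q / Cm" if "q \<in> {i..p}" for q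
  proof -
    have "q \<in> packets K" using packets_downward_closed assms(3-5) that by auto
    then show ?thesis using Cm l_nonneg rate_pos by (intro divide_left_mono) auto
  qed
  then have "(\<Sum>q\<in>{i..p}. l q / C (c q)) \<le> (\<Sum>q\<in>{i..p}. l q / Cm)"
    by (rule sum_mono)
  also have "\<dots> = (\<Sum>q\<in>{i..p}. l q) / Cm"
    by (rule sum_divide_distrib[symmetric])
  finally have "(\<Sum>q\<in>{i..p}. l q / C (c q)) \<le> (\<Sum>q\<in>{i..p}. l q) / Cm" .
  then show ?thesis using dep_busy_period[OF assms(4-7)] by simp
qed

lemma sum_unfinished_busy_prefix_le:
  assumes "p \<in> unfinished K a l C c t" "\<And>j. j \<in> unfinished K a l C c t \<Longrightarrow> p \<le> j"
    and "i \<in> packets K" "i \<le> p"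
  shows "(\<Sum>j\<in>unfinished K a l C c t. l j) + (\<Sum>j\<in>{i..<p}. l j)
           \<le> (\<Sum>j\<in>{j\<in>packets K. a i \<le> a j \<and> a j \<le> t}. l j)"
proof -
  let ?U = "unfinished K a l C c t"
  let ?S = "{j\<in>packets K. a i \<le> a j \<and> a j \<le> t}"
  have p: "p \<in> packets K" "a p \<le> t"
    using assms(1) unfolding unfinished_def by auto
  have "1 \<le> i" using assms(3) unfolding packets_def by simp
  then have prefix: "{i..<p} \<subseteq> packets K"
    using packets_downward_closed[OF p(1)] by auto
  have "a i \<le> a p" using a_mono[OF assms(3) p(1) assms(4)] .
  have "?U \<subseteq> ?S"
  proof
    fix j assume "j \<in> ?U"
    then have "j \<in> packets K" "a j \<le> t" "a p \<le> a j"
      using a_mono[OF p(1) _ assms(2)] unfolding unfinished_def by auto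
    then show "j \<in> ?S" using \<open>a i \<le> a p\<close> by simp
  qed
  moreover have "{i..<p} \<subseteq> ?S"
  proof
    fix j assume "j \<in> {i..<p}"
    then have "j \<in> packets K" "a i \<le> a j" "a j \<le> a p"
      using prefix a_mono[OF assms(3)] a_mono[OF _ p(1)] by auto
    then show "j \<in> ?S" using p(2) by simp
  qed
  moreover have "?U \<inter> {i..<p} = {}"
    using assms(2) by (meson atLeastLessThan_iff disjoint_iff not_le)
  moreover have "finite ?S"
    by (rule finite_subset[OF _ finite_arrivals[of t]]) auto
  ultimately show ?thesis
    using finite_unfinished l_nonneg
    by (metis (no_types, lifting) finite_atLeastLessThan sum.union_disjoint
        sum_mono2 Un_least Diff_iff mem_Collect_eq)
qed

theorem backlog_le:
  assumes Cm: "0 < Cm" "\<And>j. j \<in> packets K \<Longrightarrow> Cm \<le> C (c j)"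
    and L: "0 \<le> L" "\<And>j. j \<in> packets K \<Longrightarrow> l j \<le> L"
    and R: "0 \<le> R" "R \<le> Cm" and "0 \<le> Sg"
    and arrival_curve: "\<And>s t. 0 \<le> s \<Longrightarrow> s \<le> t \<Longrightarrow>
           (\<Sum>j\<in>{j\<in>packets K. s \<le> a j \<and> a j \<le> t}. l j) \<le> R * (t - s) + Sg"
  shows "backlog K a l C c t \<le> Sg + R * (L / Cm)"
proof (cases "unfinished K a l C c t = {}")
  case True
  then show ?thesis
    using backlog_eq_sum_unfinished \<open>0 \<le> Sg\<close> L(1) R(1) Cm(1) by simp
next
  case False
  let ?U = "unfinished K a l C c t"
  define p where "p = Min ?U"
  have "p \<in> ?U" and p_min: "\<And>j. j \<in> ?U \<Longrightarrow> p \<le> j"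
    unfolding p_def using False finite_unfinished by auto
  then have p: "p \<in> packets K" "a p \<le> t" "t < dep a l C c p" "1 \<le> p"
    unfolding unfinished_def packets_def by auto
  have "1 \<in> packets K" using packets_downward_closed p(1,4) by simp
  then obtain i where i: "1 \<le> i" "i \<le> p" "dep a l C c (i - 1) \<le> a i"
    and busy: "\<And>j. i < j \<Longrightarrow> j \<le> p \<Longrightarrow> a j < dep a l C c (j - 1)"
    using busy_period_start_exists[where a = a and l = l and C = C and c = c,
        OF a_nonneg[OF \<open>1 \<in> packets K\<close>] p(4)]
    by blast
  have prefix: "{i..<p} \<subseteq> packets K" "{i..p} = insert p {i..<p}"
    using packets_downward_closed[OF p(1)] i(1,2) by auto
  define Y where "Y = (\<Sum>q\<in>{i..<p}. l q)"
  have "0 \<le> Y" unfolding Y_def using prefix l_nonneg by (auto intro: sum_nonneg)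
  have iP: "i \<in> packets K"
    using packets_downward_closed[OF p(1) i(1,2)] .
  have "0 \<le> a i" "a i \<le> a p"
    using a_nonneg[OF iP] a_mono[OF iP p(1) i(2)] .
  have "(\<Sum>j\<in>?U. l j) + Y \<le> (\<Sum>j\<in>{j\<in>packets K. a i \<le> a j \<and> a j \<le> t}. l j)"
    unfolding Y_def using \<open>p \<in> ?U\<close> p_min iP i(2) by (rule sum_unfinished_busy_prefix_le)
  also have "\<dots> \<le> R * (t - a i) + Sg"
    using arrival_curve \<open>0 \<le> a i\<close> \<open>a i \<le> a p\<close> p(2) by simp
  finally have work: "backlog K a l C c t + Y \<le> R * (t - a i) + Sg"
    using backlog_eq_sum_unfinished by simp
  have "t < a i + (Y + l p) / Cm"
    using p(3) dep_le_busy_period_work[OF Cm p(1) i busy] prefix(2)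
    unfolding Y_def by (simp add: add.commute)
  then have "Cm * (t - a i) < Y + L"
    using Cm(1) L(2)[OF p(1)] by (simp add: field_simps)
  then show ?thesis
    using backlog_arith[OF work _ \<open>0 \<le> Y\<close> R Cm(1)] by blast
qed

end

theorem corollary2:
  fixes N :: nat and K :: enat
    and C r \<sigma> :: "nat \<Rightarrow> real"
    and a l :: "nat \<Rightarrow> real" and c :: "nat \<Rightarrow> nat"
  assumes N_pos: "0 < N"
    and C_pos: "\<And>n. n < N \<Longrightarrow> C n > 0"
    and r_nonneg: "\<And>n. n < N \<Longrightarrow> r n \<ge> 0"
    and sigma_nonneg: "\<And>n. n < N \<Longrightarrow> \<sigma> n \<ge> 0"
    and class_range: "\<And>j. j \<in> packets K \<Longrightarrow> c j < N"
    and a_nonneg: "\<And>j. j \<in> packets K \<Longrightarrow> 0 \<le> a j"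
    and a_mono: "\<And>i j. i \<in> packets K \<Longrightarrow> j \<in> packets K \<Longrightarrow> i \<le> j \<Longrightarrow> a i \<le> a j"
    and l_pos: "\<And>j. j \<in> packets K \<Longrightarrow> l j > 0"
    and l_bdd: "bdd_above (l ` packets K)"
    and fin_arrivals: "\<And>t. finite {j\<in>packets K. a j \<le> t}"
    and arrival_curve: "\<And>n s t. n < N \<Longrightarrow> 0 \<le> s \<Longrightarrow> s \<le> t \<Longrightarrow>
                          arr_class K a l c n s t \<le> r n * (t - s) + \<sigma> n"
    and stability: "(\<Sum>n<N. r n) \<le> Cmin N C"
  shows "\<forall>t\<ge>0. backlog K a l C c t
           \<le> (\<Sum>n<N. \<sigma> n) + (\<Sum>n<N. r n) * (maxlen N K l c / Cmin N C)"
proof -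
  interpret fifo_system K a l C c
    by unfold_locales
      (simp_all add: a_nonneg a_mono fin_arrivals less_imp_le[OF l_pos] C_pos[OF class_range])
  have "0 \<le> (\<Sum>n<N. r n)" "0 \<le> (\<Sum>n<N. \<sigma> n)"
    using r_nonneg sigma_nonneg by (auto intro: sum_nonneg)
  moreover have "l j \<le> maxlen N K l c" if "j \<in> packets K" for j
    using l_bdd that class_range[OF that] by (rule le_maxlen)
  moreover have "(\<Sum>j\<in>{j\<in>packets K. s \<le> a j \<and> a j \<le> t}. l j)
      \<le> (\<Sum>n<N. r n) * (t - s) + (\<Sum>n<N. \<sigma> n)" if "0 \<le> s" "s \<le> t" for s t
    using class_range fin_arrivals arrival_curve that by (rule aggregate_arrival_curve)
  ultimately show ?thesis
    using backlog_le[OF Cmin_pos[OF N_pos C_pos] Cmin_le[OF class_range]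
        maxlen_nonneg[OF N_pos l_bdd less_imp_le[OF l_pos]] _ _ stability]
    by blast
qed

end
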